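(* For any $1\leq j\leq i<n$ and $r\in\mathbb{Z}$: $$E^{(r)}_{j,i+1}=(-1)^{\delta_{r<0}}v^{-jr}\,\Upsilon^{-1}(\tilde e^{(r)}_{j,i+1}),\qquad F^{(r)}_{i+1,j}=(-1)^{\delta_{r>0}}v^{-jr}\,\Upsilon^{-1}(\tilde f^{(r)}_{i+1,j}),$$ where $\delta_{r<0}$ (resp. $\delta_{r>0}$) equals $1$ if $r<0$ (resp. $r>0$) and $0$ otherwise.
   Context: Let $v$ be a formal variable, $(c_{ii'})$ the Cartan matrix of $\mathfrak{sl}_n$, $[a,b]_x=ab-x\,ba$, $\delta(z)=\sum_{r\in\mathbb{Z}}z^r$. $U_v(L\mathfrak{gl}_n)$ is the $\mathbb{C}(v)$-algebra generated by $\{e_{i,r},f_{i,r}\}_{1\leq i<n}^{r\in\mathbb{Z}}\cup\{\varphi^+_{j,s},\varphi^-_{j,-s}\}_{1\leq j\leq n}^{s\in\mathbb{N}}$, with $e_i(z)=\sum_re_{i,r}z^{-r}$, $f_i(z)=\sum_rf_{i,r}z^{-r}$, $\varphi^\pm_j(z)=\sum_{s\geq0}\varphi^\pm_{j,\pm s}z^{\mp s}$, $\psi^\pm_i(z)=(\varphi^\pm_i(z))^{-1}\varphi^\pm_{i+1}(v^{-1}z)$, and relations: $[\varphi^\epsilon_j(z),\varphi^{\epsilon'}_{j'}(w)]=0$, $\varphi^\pm_{j,0}\varphi^\mp_{j,0}=1$; $(z-v^{c_{ii'}}w)e_i(z)e_{i'}(w)=(v^{c_{ii'}}z-w)e_{i'}(w)e_i(z)$;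 $(v^{c_{ii'}}z-w)f_i(z)f_{i'}(w)=(z-v^{c_{ii'}}w)f_{i'}(w)f_i(z)$; $(vz-v^{-1}w)^{\delta_{ji}}(z-vw)^{\delta_{j,i+1}}\varphi^\epsilon_j(z)e_i(w)=(z-w)^{\delta_{ji}}(vz-w)^{\delta_{j,i+1}}e_i(w)\varphi^\epsilon_j(z)$; $(z-w)^{\delta_{ji}}(vz-w)^{\delta_{j,i+1}}\varphi^\epsilon_j(z)f_i(w)=(vz-v^{-1}w)^{\delta_{ji}}(z-vw)^{\delta_{j,i+1}}f_i(w)\varphi^\epsilon_j(z)$; $[e_i(z),f_{i'}(w)]=\frac{\delta_{ii'}}{v-v^{-1}}\delta(z/w)(\psi^+_i(z)-\psi^-_i(z))$; $e_i,e_{i'}$ (and $f_i,f_{i'}$) commute if $c_{ii'}=0$; $[e_i(z_1),[e_i(z_2),e_{i'}(w)]_{v^{-1}}]_v+(z_1\leftrightarrow z_2)=0$ and likewise for $f$ if $c_{ii'}=-1$. Half-currents $e^+_i(z)=\sum_{r\geq0}e_{i,r}z^{-r}$, $e^-_i(z)=-\sum_{r<0}e_{i,r}z^{-r}$, $f^+_i(z)=\sum_{r>0}f_{i,r}z^{-r}$, $f^-_i(z)=-\sum_{r\leq0}f_{i,r}z^{-r}$. $E^{(r)}_{j,i+1}=(v-v^{-1})[e_{i,0},\cdots,[e_{j+1,0},e_{j,r}]_{v^{-1}}\cdots]_{v^{-1}}$, $F^{(r)}_{i+1,j}=(v^{-1}-v)[\cdots[f_{j,r},f_{j+1,0}]_v,\cdots,f_{i,0}]_v$.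 $R_{\mathrm{trig}}(z,w)=(vz-v^{-1}w)\sum_iE_{ii}\otimes E_{ii}+(z-w)\sum_{i\neq j}E_{ii}\otimes E_{jj}+(v-v^{-1})z\sum_{i<j}E_{ij}\otimes E_{ji}+(v-v^{-1})w\sum_{i>j}E_{ij}\otimes E_{ji}$; $U^{\mathrm{rtt}}_v(L\mathfrak{gl}_n)$ is the $\mathbb{C}(v)$-algebra generated by $\{t^\pm_{ij}[\pm r]\}^{r\in\mathbb{N}}$ with relations $t^\pm_{ii}[0]t^\mp_{ii}[0]=1$, $t^+_{ij}[0]=t^-_{ji}[0]=0$ ($j<i$), $R_{\mathrm{trig}}(z,w)T^\epsilon_1(z)T^{\epsilon'}_2(w)=T^{\epsilon'}_2(w)T^\epsilon_1(z)R_{\mathrm{trig}}(z,w)$ for $(\epsilon,\epsilon')\in\{(+,+),(-,-),(-,+)\}$, $T^\pm(z)=\sum t^\pm_{ij}(z)\otimes E_{ij}$, $t^\pm_{ij}(z)=\sum_{r\geq0}t^\pm_{ij}[\pm r]z^{\mp r}$. Gauss decomposition $T^\pm(z)=\tilde F^\pm(z)\tilde G^\pm(z)\tilde E^\pm(z)$ ($\tilde F^\pm$ lower unitriangular with entries $\tilde f^\pm_{ij}(z)$, $\tilde G^\pm=\operatorname{diag}(\tilde g^\pm_i(z))$, $\tilde E^\pm$ upper unitriangular with entries $\tilde e^\pm_{ij}(z)$), with modes $\tilde e^+_{ij}(z)=\sum_{r\geq0}\tilde e^{(r)}_{ij}z^{-r}$, $\tilde e^-_{ij}(z)=\sum_{r<0}\tilde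 e^{(r)}_{ij}z^{-r}$, $\tilde f^+_{ij}(z)=\sum_{r>0}\tilde f^{(r)}_{ij}z^{-r}$, $\tilde f^-_{ij}(z)=\sum_{r\leq0}\tilde f^{(r)}_{ij}z^{-r}$. $\Upsilon\colon U_v(L\mathfrak{gl}_n)\xrightarrow{\sim}U^{\mathrm{rtt}}_v(L\mathfrak{gl}_n)$ is the $\mathbb{C}(v)$-algebra isomorphism given by $e^\pm_i(z)\mapsto\frac{\tilde e^\pm_{i,i+1}(v^iz)}{v-v^{-1}}$, $f^\pm_i(z)\mapsto\frac{\tilde f^\pm_{i+1,i}(v^iz)}{v-v^{-1}}$, $\varphi^\pm_j(z)\mapsto\tilde g^\pm_j(v^jz)$. *)

theory Defs
  imports Complex_Main "HOL-Computational_Algebra.Polynomial" "HOL-Computational_Algebra.Fraction_Field"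
begin

type_synonym cv = "complex poly fract"

definition vv :: cv where "vv = Fract [:0, 1:] 1"

definition cv_algebra :: "(cv \<Rightarrow> 'b::ring_1) \<Rightarrow> bool" where
  "cv_algebra \<iota> \<longleftrightarrow> \<iota> 1 = 1 \<and> (\<forall>x y. \<iota> (x + y) = \<iota> x + \<iota> y) \<and>
     (\<forall>x y. \<iota> (x * y) = \<iota> x * \<iota> y) \<and> (\<forall>x y. \<iota> x * y = y * \<iota> x)"

definition qbr :: "(cv \<Rightarrow> 'b::ring_1) \<Rightarrow> cv \<Rightarrow> 'b \<Rightarrow> 'b \<Rightarrow> 'b" where
  "qbr \<iota> x a b = a * b - \<iota> x * b * a"

definition alg_iso :: "(cv \<Rightarrow> 'a::ring_1) \<Rightarrow> (cv \<Rightarrow> 'b::ring_1) \<Rightarrow> ('a \<Rightarrow> 'b) \<Rightarrow> bool" where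
  "alg_iso \<iota>A \<iota>B \<Phi> \<longleftrightarrow> bij \<Phi> \<and> (\<forall>x y. \<Phi> (x + y) = \<Phi> x + \<Phi> y) \<and>
     (\<forall>x y. \<Phi> (x * y) = \<Phi> x * \<Phi> y) \<and> \<Phi> 1 = 1 \<and> (\<forall>c. \<Phi> (\<iota>A c) = \<iota>B c)"

section \<open>The trigonometric R-matrix, written as R(z,w) = z Rz + w Rw\<close>

text \<open>Entry R_{(a,c),(a',c')}: coefficient of z\<close>
definition Rz :: "nat \<Rightarrow> nat \<Rightarrow> nat \<Rightarrow> nat \<Rightarrow> cv" where
  "Rz a c a' c' =
     (if a' = a \<and> c' = c then (if a = c then vv else 1)
      else if a' = c \<and> c' = a \<and> a < c then vv - inverse vv
      else 0)"

definition Rw :: "nat \<Rightarrow> nat \<Rightarrow> nat \<Rightarrow> nat \<Rightarrow> cv" where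
  "Rw a c a' c' =
     (if a' = a \<and> c' = c then (if a = c then - inverse vv else -1)
      else if a' = c \<and> c' = a \<and> c < a then vv - inverse vv
      else 0)"

section \<open>Series as Laurent coefficient functions (coefficient of z^k)\<close>

text \<open>t^+_{ab}(z) = sum_{r>=0} t^+_{ab}[r] z^{-r}, with tp a b r = t^+_{ab}[r]\<close>
definition Lp :: "(nat \<Rightarrow> nat \<Rightarrow> nat \<Rightarrow> 'b::zero) \<Rightarrow> nat \<Rightarrow> nat \<Rightarrow> int \<Rightarrow> 'b" where
  "Lp x a b k = (if k \<le> 0 then x a b (nat (- k)) else 0)"

text \<open>t^-_{ab}(z) = sum_{r>=0} t^-_{ab}[-r] z^{r}, with tm a b r = t^-_{ab}[-r]\<close>
definition Lm :: "(nat \<Rightarrow> nat \<Rightarrow> nat \<Rightarrow> 'b::zero) \<Rightarrow> nat \<Rightarrow> nat \<Rightarrow> int \<Rightarrow> 'b" where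
  "Lm x a b k = (if 0 \<le> k then x a b (nat k) else 0)"

text \<open>R(z,w) X_1(z) Y_2(w) = Y_2(w) X_1(z) R(z,w), compared coefficientwise at z^p w^q
  and at the matrix entry ((a,c),(b,d)) of End(C^n (x) C^n).\<close>
definition rtt_rel :: "(cv \<Rightarrow> 'b::ring_1) \<Rightarrow> nat \<Rightarrow> (nat \<Rightarrow> nat \<Rightarrow> int \<Rightarrow> 'b)
    \<Rightarrow> (nat \<Rightarrow> nat \<Rightarrow> int \<Rightarrow> 'b) \<Rightarrow> bool" where
  "rtt_rel \<iota> n X Y \<longleftrightarrow>
    (\<forall>a\<in>{1..n}. \<forall>b\<in>{1..n}. \<forall>c\<in>{1..n}. \<forall>d\<in>{1..n}. \<forall>p q :: int.
      (\<Sum>a'\<in>{1..n}. \<Sum>c'\<in>{1..n}.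
          \<iota> (Rz a c a' c') * X a' b (p - 1) * Y c' d q
        + \<iota> (Rw a c a' c') * X a' b p * Y c' d (q - 1))
    = (\<Sum>b'\<in>{1..n}. \<Sum>d'\<in>{1..n}.
          Y c d' q * X a b' (p - 1) * \<iota> (Rz b' d' b d)
        + Y c d' (q - 1) * X a b' p * \<iota> (Rw b' d' b d)))"

definition rtt_model :: "(cv \<Rightarrow> 'b::ring_1) \<Rightarrow> nat \<Rightarrow> (nat \<Rightarrow> nat \<Rightarrow> nat \<Rightarrow> 'b)
    \<Rightarrow> (nat \<Rightarrow> nat \<Rightarrow> nat \<Rightarrow> 'b) \<Rightarrow> bool" where
  "rtt_model \<iota> n tp tm \<longleftrightarrow>
     (\<forall>a\<in>{1..n}. tp a a 0 * tm a a 0 = 1 \<and> tm a a 0 * tp a a 0 = 1) \<and>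
     (\<forall>a\<in>{1..n}. \<forall>b\<in>{1..n}. b < a \<longrightarrow> tp a b 0 = 0 \<and> tm b a 0 = 0) \<and>
     rtt_rel \<iota> n (Lp tp) (Lp tp) \<and>
     rtt_rel \<iota> n (Lm tm) (Lm tm) \<and>
     rtt_rel \<iota> n (Lm tm) (Lp tp)"

section \<open>Gauss decomposition T^\<pm>(z) = F^\<pm>(z) G^\<pm>(z) E^\<pm>(z)\<close>

definition conv3 :: "(nat \<Rightarrow> 'b::ring_1) \<Rightarrow> (nat \<Rightarrow> 'b) \<Rightarrow> (nat \<Rightarrow> 'b) \<Rightarrow> nat \<Rightarrow> 'b" where
  "conv3 F G E s = (\<Sum>p\<le>s. \<Sum>q\<le>s - p. F p * G q * E (s - p - q))"

text \<open>Coefficient of z^{-p} in the (a,k) entry of F^+; ftil a k r = f~^{(r)}_{ak}\<close>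
definition Fpc :: "(nat \<Rightarrow> nat \<Rightarrow> int \<Rightarrow> 'b::ring_1) \<Rightarrow> nat \<Rightarrow> nat \<Rightarrow> nat \<Rightarrow> 'b" where
  "Fpc ftil a k p = (if k = a then (if p = 0 then 1 else 0)
                     else if 0 < p then ftil a k (int p) else 0)"

text \<open>Coefficient of z^{-u} in the (k,b) entry of E^+; etil k b r = e~^{(r)}_{kb}\<close>
definition Epc :: "(nat \<Rightarrow> nat \<Rightarrow> int \<Rightarrow> 'b::ring_1) \<Rightarrow> nat \<Rightarrow> nat \<Rightarrow> nat \<Rightarrow> 'b" where
  "Epc etil k b u = (if k = b then (if u = 0 then 1 else 0) else etil k b (int u))"

text \<open>Coefficient of z^{p} in the (a,k) entry of F^-\<close>
definition Fmc :: "(nat \<Rightarrow> nat \<Rightarrow> int \<Rightarrow> 'b::ring_1) \<Rightarrow> nat \<Rightarrow> nat \<Rightarrow> nat \<Rightarrow> 'b" where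
  "Fmc ftil a k p = (if k = a then (if p = 0 then 1 else 0) else ftil a k (- int p))"

text \<open>Coefficient of z^{u} in the (k,b) entry of E^-\<close>
definition Emc :: "(nat \<Rightarrow> nat \<Rightarrow> int \<Rightarrow> 'b::ring_1) \<Rightarrow> nat \<Rightarrow> nat \<Rightarrow> nat \<Rightarrow> 'b" where
  "Emc etil k b u = (if k = b then (if u = 0 then 1 else 0)
                     else if 0 < u then etil k b (- int u) else 0)"

text \<open>gp k s = coefficient of z^{-s} in g~^+_k(z), gm k s = coefficient of z^{s} in g~^-_k(z)\<close>
definition gauss_decomp :: "nat \<Rightarrow> (nat \<Rightarrow> nat \<Rightarrow> nat \<Rightarrow> 'b::ring_1) \<Rightarrow> (nat \<Rightarrow> nat \<Rightarrow> nat \<Rightarrow> 'b)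
    \<Rightarrow> (nat \<Rightarrow> nat \<Rightarrow> int \<Rightarrow> 'b) \<Rightarrow> (nat \<Rightarrow> nat \<Rightarrow> int \<Rightarrow> 'b)
    \<Rightarrow> (nat \<Rightarrow> nat \<Rightarrow> 'b) \<Rightarrow> (nat \<Rightarrow> nat \<Rightarrow> 'b) \<Rightarrow> bool" where
  "gauss_decomp n tp tm etil ftil gp gm \<longleftrightarrow>
    (\<forall>a\<in>{1..n}. \<forall>b\<in>{1..n}. \<forall>s.
       tp a b s = (\<Sum>k\<in>{1..min a b}. conv3 (Fpc ftil a k) (gp k) (Epc etil k b) s) \<and>
       tm a b s = (\<Sum>k\<in>{1..min a b}. conv3 (Fmc ftil a k) (gm k) (Emc etil k b) s))"

text \<open>e k r = e_{k,r}, f k r = f_{k,r}, php j s = phi^+_{j,s}, phm j s = phi^-_{j,-s}.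
  Coefficients of e^\<pm>_k(z) -> e~^\<pm>_{k,k+1}(v^k z)/(v-v^{-1}) etc.\<close>
definition upsilon_gens :: "(cv \<Rightarrow> 'b::ring_1) \<Rightarrow> nat \<Rightarrow> ('a \<Rightarrow> 'b)
    \<Rightarrow> (nat \<Rightarrow> int \<Rightarrow> 'a) \<Rightarrow> (nat \<Rightarrow> int \<Rightarrow> 'a) \<Rightarrow> (nat \<Rightarrow> nat \<Rightarrow> 'a) \<Rightarrow> (nat \<Rightarrow> nat \<Rightarrow> 'a)
    \<Rightarrow> (nat \<Rightarrow> nat \<Rightarrow> int \<Rightarrow> 'b) \<Rightarrow> (nat \<Rightarrow> nat \<Rightarrow> int \<Rightarrow> 'b)
    \<Rightarrow> (nat \<Rightarrow> nat \<Rightarrow> 'b) \<Rightarrow> (nat \<Rightarrow> nat \<Rightarrow> 'b) \<Rightarrow> bool" where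
  "upsilon_gens \<iota>B n \<Phi> e f php phm etil ftil gp gm \<longleftrightarrow>
    (\<forall>k\<in>{1..<n}. \<forall>r::int.
       \<Phi> (e k r) = \<iota>B ((if r < 0 then -1 else 1) * vv powi (- (int k * r)) / (vv - inverse vv))
                     * etil k (k + 1) r) \<and>
    (\<forall>k\<in>{1..<n}. \<forall>r::int.
       \<Phi> (f k r) = \<iota>B ((if 0 < r then 1 else -1) * vv powi (- (int k * r)) / (vv - inverse vv))
                     * ftil (k + 1) k r) \<and>
    (\<forall>j\<in>{1..n}. \<forall>s::nat.
       \<Phi> (php j s) = \<iota>B (vv powi (- (int j * int s))) * gp j s \<and>
       \<Phi> (phm j s) = \<iota>B (vv powi (int j * int s)) * gm j s)"

section \<open>The elements E^{(r)}_{j,i+1} and F^{(r)}_{i+1,j} (nested part, depth k = i - j)\<close>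

fun nestE :: "(cv \<Rightarrow> 'a::ring_1) \<Rightarrow> (nat \<Rightarrow> int \<Rightarrow> 'a) \<Rightarrow> nat \<Rightarrow> int \<Rightarrow> nat \<Rightarrow> 'a" where
  "nestE \<iota> e j r 0 = e j r"
| "nestE \<iota> e j r (Suc k) = qbr \<iota> (inverse vv) (e (j + Suc k) 0) (nestE \<iota> e j r k)"

fun nestF :: "(cv \<Rightarrow> 'a::ring_1) \<Rightarrow> (nat \<Rightarrow> int \<Rightarrow> 'a) \<Rightarrow> nat \<Rightarrow> int \<Rightarrow> nat \<Rightarrow> 'a" where
  "nestF \<iota> f j r 0 = f j r"
| "nestF \<iota> f j r (Suc k) = qbr \<iota> vv (nestF \<iota> f j r k) (f (j + Suc k) 0)"

definition Eroot :: "(cv \<Rightarrow> 'a::ring_1) \<Rightarrow> (nat \<Rightarrow> int \<Rightarrow> 'a) \<Rightarrow> int \<Rightarrow> nat \<Rightarrow> nat \<Rightarrow> 'a" where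
  "Eroot \<iota> e r j i = \<iota> (vv - inverse vv) * nestE \<iota> e j r (i - j)"

definition Froot :: "(cv \<Rightarrow> 'a::ring_1) \<Rightarrow> (nat \<Rightarrow> int \<Rightarrow> 'a) \<Rightarrow> int \<Rightarrow> nat \<Rightarrow> nat \<Rightarrow> 'a" where
  "Froot \<iota> f r j i = \<iota> (inverse vv - vv) * nestF \<iota> f j r (i - j)"

end

theory Submission
  imports Defs
begin

text \<open>By induction on i - j, Upsilon maps the nested q-commutator defining E^(r)_{j,i+1} to a scalar
  multiple of e~^(r)_{j,i+1}, provided that for j < i

    e~^(0)_{i,i+1} e~^(r)_{j,i} - v^-1 e~^(r)_{j,i} e~^(0)_{i,i+1} = (v - v^-1) e~^(r)_{j,i+1}

  (and dually for f~); the signs and powers of v then come from the normalisation of Upsilon on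
  the generators. To prove the identity, put X = t+_{i,i+1}[0] and Y = t+_{ii}[0]. The RTT relation
  with one factor in degree 0 shows that X and Y commute with all t_{cd} with c, d < i and satisfy
  explicit exchange relations with the column pairs (t_{ki}, t_{k,i+1}), k < i, in both T+ and T-.
  The Gauss factors are computed from T by a triangular recursion that only uses sums, products
  with entries of the upper left block and inverses of diagonal constant terms, so the same
  relations hold for the pair (e~_{ji}, e~_{j,i+1}). Since X = Y e~^(0)_{i,i+1} with Y invertible,
  they amount to the identity above.\<close>

lemma cv_algebra_hom:
  assumes "cv_algebra \<iota>"
  shows "\<iota> 0 = 0" "\<iota> 1 = 1" "\<iota> (x + y) = \<iota> x + \<iota> y" "\<iota> (x * y) = \<iota> x * \<iota> y"
    "\<iota> (- x) = - \<iota> x" "\<iota> (x - y) = \<iota> x - \<iota> y"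
proof -
  have add: "\<And>x y. \<iota> (x + y) = \<iota> x + \<iota> y"
    using assms unfolding cv_algebra_def by blast
  have zero: "\<iota> 0 = 0"
    using add[of 0 0] by simp
  have minus: "\<iota> (- x) = - \<iota> x" for x
    using add[of "- x" x] zero by (simp add: eq_neg_iff_add_eq_0)
  show "\<iota> 0 = 0" "\<iota> (x + y) = \<iota> x + \<iota> y" "\<iota> (- x) = - \<iota> x" "\<iota> (x - y) = \<iota> x - \<iota> y"
    using zero add minus by (simp_all only: diff_conv_add_uminus)
  show "\<iota> 1 = 1" "\<iota> (x * y) = \<iota> x * \<iota> y"
    using assms unfolding cv_algebra_def by blast+
qed

lemma cv_algebra_central:
  assumes "cv_algebra \<iota>"
  shows "\<iota> c * x = x * \<iota> c" "\<iota> c * x * y = x * y * \<iota> c"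
proof -
  have central: "\<iota> c * z = z * \<iota> c" for z
    using assms unfolding cv_algebra_def by blast
  show "\<iota> c * x = x * \<iota> c" "\<iota> c * x * y = x * y * \<iota> c"
    using central by (metis mult.assoc)+
qed

lemma vv_nonzero: "vv \<noteq> 0"
  by (simp add: vv_def Zero_fract_def eq_fract)

lemma vv_minus_inverse_nonzero: "vv - inverse vv \<noteq> 0"
proof
  assume "vv - inverse vv = 0"
  then have "vv * vv = 1"
    using vv_nonzero by (metis eq_iff_diff_eq_0 right_inverse)
  then have "Fract ([:0, 1:] * [:0, 1:]) 1 = Fract (1 :: complex poly) 1"
    by (simp add: vv_def One_fract_def)
  then have "degree ([:0, 1:] * [:0, 1:] :: complex poly) = degree (1 :: complex poly)"
    by (simp add: eq_fract)
  then show False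
    by (simp add: degree_mult_eq)
qed

lemma cv_algebra_vv_inverse:
  assumes "cv_algebra \<iota>"
  shows "\<iota> vv * \<iota> (inverse vv) = 1" "\<iota> (inverse vv) * \<iota> vv = 1"
  using cv_algebra_hom(2,4)[OF assms] vv_nonzero by (metis right_inverse left_inverse)+

lemma sum_sum_delta:
  fixes F :: "'x \<Rightarrow> 'y \<Rightarrow> 'b::comm_monoid_add"
  assumes "finite A" "finite B"
  shows "(\<Sum>x\<in>A. \<Sum>y\<in>B. if x = a \<and> y = b \<and> P then F x y else 0)
       = (if a \<in> A \<and> b \<in> B \<and> P then F a b else 0)"
proof -
  have "(\<Sum>y\<in>B. if x = a \<and> y = b \<and> P then F x y else 0)
      = (if x = a then (if b \<in> B \<and> P then F a b else 0) else 0)" for x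
    using assms(2) by (cases "x = a"; cases P) simp_all
  then show ?thesis
    using assms(1) by simp
qed

lemma if_disjoint_split:
  fixes x y :: "'a::monoid_add"
  assumes "P \<Longrightarrow> \<not> Q"
  shows "(if P then x else if Q then y else 0) = (if P then x else 0) + (if Q then y else 0)"
  using assms by auto

lemma cv_algebra_if_zero:
  assumes "cv_algebra \<iota>"
  shows "\<iota> (if P then x else 0) = (if P then \<iota> x else 0)"
  using cv_algebra_hom(1)[OF assms] by simp

lemma Rz_decomp_left: "Rz a c a' c' = (if a' = a \<and> c' = c then (if a = c then vv else 1) else 0)
   + (if a' = c \<and> c' = a \<and> a < c then vv - inverse vv else 0)"
  unfolding Rz_def by (rule if_disjoint_split) auto

lemma Rw_decomp_left: "Rw a c a' c' = (if a' = a \<and> c' = c then (if a = c then - inverse vv else - 1) else 0)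
   + (if a' = c \<and> c' = a \<and> c < a then vv - inverse vv else 0)"
  unfolding Rw_def by (rule if_disjoint_split) auto

lemma Rz_decomp_right: "Rz b' d' b d = (if b' = b \<and> d' = d then (if b = d then vv else 1) else 0)
   + (if b' = d \<and> d' = b \<and> d < b then vv - inverse vv else 0)"
proof -
  have "Rz b' d' b d = (if b' = b \<and> d' = d then (if b = d then vv else 1)
      else if b' = d \<and> d' = b \<and> d < b then vv - inverse vv else 0)"
    unfolding Rz_def by (intro if_cong) auto
  also have "\<dots> = (if b' = b \<and> d' = d then (if b = d then vv else 1) else 0)
      + (if b' = d \<and> d' = b \<and> d < b then vv - inverse vv else 0)"
    by (rule if_disjoint_split) auto
  finally show ?thesis .
qed

lemma Rw_decomp_right: "Rw b' d' b d = (if b' = b \<and> d' = d then (if b = d then - inverse vv else - 1) else 0)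
   + (if b' = d \<and> d' = b \<and> b < d then vv - inverse vv else 0)"
proof -
  have "Rw b' d' b d = (if b' = b \<and> d' = d then (if b = d then - inverse vv else - 1)
      else if b' = d \<and> d' = b \<and> b < d then vv - inverse vv else 0)"
    unfolding Rw_def by (intro if_cong) auto
  also have "\<dots> = (if b' = b \<and> d' = d then (if b = d then - inverse vv else - 1) else 0)
      + (if b' = d \<and> d' = b \<and> b < d then vv - inverse vv else 0)"
    by (rule if_disjoint_split) auto
  finally show ?thesis .
qed

lemma sum_Rz_left:
  fixes X Y :: "nat \<Rightarrow> 'b::ring_1"
  assumes cv: "cv_algebra \<iota>" and "a \<in> {1..n}" "c \<in> {1..n}"
  shows "(\<Sum>a'\<in>{1..n}. \<Sum>c'\<in>{1..n}. \<iota> (Rz a c a' c') * X a' * Y c')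
     = \<iota> (if a = c then vv else 1) * X a * Y c + (if a < c then \<iota> (vv - inverse vv) * X c * Y a else 0)"
  using assms(2,3)
  by (simp only: Rz_decomp_left cv_algebra_hom(3)[OF cv] cv_algebra_if_zero[OF cv] distrib_right
      sum.distrib if_distrib[of "\<lambda>z. z * _"] mult_zero_left finite_atLeastAtMost simp_thms if_True
      sum_sum_delta sum_sum_delta[where P = True, simplified])

lemma sum_Rw_left:
  fixes X Y :: "nat \<Rightarrow> 'b::ring_1"
  assumes cv: "cv_algebra \<iota>" and "a \<in> {1..n}" "c \<in> {1..n}"
  shows "(\<Sum>a'\<in>{1..n}. \<Sum>c'\<in>{1..n}. \<iota> (Rw a c a' c') * X a' * Y c')
     = \<iota> (if a = c then - inverse vv else - 1) * X a * Y c + (if c < a then \<iota> (vv - inverse vv) * X c * Y a else 0)"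
  using assms(2,3)
  by (simp only: Rw_decomp_left cv_algebra_hom(3)[OF cv] cv_algebra_if_zero[OF cv] distrib_right
      sum.distrib if_distrib[of "\<lambda>z. z * _"] mult_zero_left finite_atLeastAtMost simp_thms if_True
      sum_sum_delta sum_sum_delta[where P = True, simplified])

lemma sum_Rz_right:
  fixes X Y :: "nat \<Rightarrow> 'b::ring_1"
  assumes cv: "cv_algebra \<iota>" and "b \<in> {1..n}" "d \<in> {1..n}"
  shows "(\<Sum>b'\<in>{1..n}. \<Sum>d'\<in>{1..n}. Y d' * X b' * \<iota> (Rz b' d' b d))
     = Y d * X b * \<iota> (if b = d then vv else 1) + (if d < b then Y b * X d * \<iota> (vv - inverse vv) else 0)"
  using assms(2,3)
  by (simp only: Rz_decomp_right cv_algebra_hom(3)[OF cv] cv_algebra_if_zero[OF cv] distrib_left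
      sum.distrib if_distrib[of "\<lambda>z. _ * z"] mult_zero_right finite_atLeastAtMost simp_thms if_True
      sum_sum_delta sum_sum_delta[where P = True, simplified])

lemma sum_Rw_right:
  fixes X Y :: "nat \<Rightarrow> 'b::ring_1"
  assumes cv: "cv_algebra \<iota>" and "b \<in> {1..n}" "d \<in> {1..n}"
  shows "(\<Sum>b'\<in>{1..n}. \<Sum>d'\<in>{1..n}. Y d' * X b' * \<iota> (Rw b' d' b d))
     = Y d * X b * \<iota> (if b = d then - inverse vv else - 1) + (if b < d then Y b * X d * \<iota> (vv - inverse vv) else 0)"
  using assms(2,3)
  by (simp only: Rw_decomp_right cv_algebra_hom(3)[OF cv] cv_algebra_if_zero[OF cv] distrib_left
      sum.distrib if_distrib[of "\<lambda>z. _ * z"] mult_zero_right finite_atLeastAtMost simp_thms if_True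
      sum_sum_delta sum_sum_delta[where P = True, simplified])

lemma rtt_rel_entry:
  assumes cv: "cv_algebra \<iota>" and rel: "rtt_rel \<iota> n X Y"
    and "a \<in> {1..n}" "b \<in> {1..n}" "c \<in> {1..n}" "d \<in> {1..n}"
  shows "\<iota> (if a = c then vv else 1) * X a b (p - 1) * Y c d q
      + (if a < c then \<iota> (vv - inverse vv) * X c b (p - 1) * Y a d q else 0)
      + (\<iota> (if a = c then - inverse vv else - 1) * X a b p * Y c d (q - 1)
      + (if c < a then \<iota> (vv - inverse vv) * X c b p * Y a d (q - 1) else 0))
    = Y c d q * X a b (p - 1) * \<iota> (if b = d then vv else 1)
      + (if d < b then Y c b q * X a d (p - 1) * \<iota> (vv - inverse vv) else 0)
      + (Y c d (q - 1) * X a b p * \<iota> (if b = d then - inverse vv else - 1)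
      + (if b < d then Y c b (q - 1) * X a d p * \<iota> (vv - inverse vv) else 0))"
proof -
  have "(\<Sum>a'\<in>{1..n}. \<Sum>c'\<in>{1..n}.
          \<iota> (Rz a c a' c') * X a' b (p - 1) * Y c' d q + \<iota> (Rw a c a' c') * X a' b p * Y c' d (q - 1))
    = (\<Sum>b'\<in>{1..n}. \<Sum>d'\<in>{1..n}.
          Y c d' q * X a b' (p - 1) * \<iota> (Rz b' d' b d) + Y c d' (q - 1) * X a b' p * \<iota> (Rw b' d' b d))"
    using rel assms(3-) unfolding rtt_rel_def by blast
  then show ?thesis
    by (simp only: sum.distrib
        sum_Rz_left[OF cv assms(3,5), of "\<lambda>a'. X a' b (p - 1)" "\<lambda>c'. Y c' d q"]
        sum_Rw_left[OF cv assms(3,5), of "\<lambda>a'. X a' b p" "\<lambda>c'. Y c' d (q - 1)"]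
        sum_Rz_right[OF cv assms(4,6), of "\<lambda>d'. Y c d' q" "\<lambda>b'. X a b' (p - 1)"]
        sum_Rw_right[OF cv assms(4,6), of "\<lambda>d'. Y c d' (q - 1)" "\<lambda>b'. X a b' p"])
qed

lemma rtt_model_D:
  assumes "rtt_model \<iota> n tp tm"
  shows "rtt_rel \<iota> n (Lp tp) (Lp tp)" "rtt_rel \<iota> n (Lm tm) (Lm tm)" "rtt_rel \<iota> n (Lm tm) (Lp tp)"
    "\<And>a b. a \<in> {1..n} \<Longrightarrow> b \<in> {1..n} \<Longrightarrow> b < a \<Longrightarrow> tp a b 0 = 0"
    "\<And>a b. a \<in> {1..n} \<Longrightarrow> b \<in> {1..n} \<Longrightarrow> b < a \<Longrightarrow> tm b a 0 = 0"
    "\<And>a. a \<in> {1..n} \<Longrightarrow> tp a a 0 * tm a a 0 = 1"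
    "\<And>a. a \<in> {1..n} \<Longrightarrow> tm a a 0 * tp a a 0 = 1"
  using assms unfolding rtt_model_def by blast+

lemma Lp_simps: "Lp x a b 0 = x a b 0" "Lp x a b 1 = 0" "Lp x a b (- int s) = x a b s"
  by (simp_all add: Lp_def)

lemma Lm_simps: "Lm x a b 0 = x a b 0" "Lm x a b (- 1) = 0" "Lm x a b (int s) = x a b s"
  by (simp_all add: Lm_def)

lemma rtt_tp0_tp:
  assumes cv: "cv_algebra \<iota>" and "rtt_model \<iota> n tp tm"
    and "a \<in> {1..n}" "b \<in> {1..n}" "c \<in> {1..n}" "d \<in> {1..n}"
  shows "\<iota> (if a = c then vv else 1) * tp a b 0 * tp c d s
      + (if a < c then \<iota> (vv - inverse vv) * tp c b 0 * tp a d s else 0)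
    = tp c d s * tp a b 0 * \<iota> (if b = d then vv else 1)
      + (if d < b then tp c b s * tp a d 0 * \<iota> (vv - inverse vv) else 0)"
  using rtt_rel_entry[OF cv rtt_model_D(1)[OF assms(2)] assms(3-), of 1 "- int s"]
  by (simp only: Lp_simps diff_self mult_zero_left mult_zero_right if_cancel add_0_right)

lemma rtt_tm_tp0:
  assumes cv: "cv_algebra \<iota>" and "rtt_model \<iota> n tp tm"
    and "a \<in> {1..n}" "b \<in> {1..n}" "c \<in> {1..n}" "d \<in> {1..n}"
  shows "\<iota> (if a = c then - inverse vv else - 1) * tm a b s * tp c d 0
      + (if c < a then \<iota> (vv - inverse vv) * tm c b s * tp a d 0 else 0)
    = tp c d 0 * tm a b s * \<iota> (if b = d then - inverse vv else - 1)
      + (if b < d then tp c b 0 * tm a d s * \<iota> (vv - inverse vv) else 0)"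
  using rtt_rel_entry[OF cv rtt_model_D(3)[OF assms(2)] assms(3-), of "int s" 1]
  by (simp only: Lp_simps Lm_simps diff_self mult_zero_left mult_zero_right if_cancel add_0_left)

lemma rtt_tm0:
  assumes cv: "cv_algebra \<iota>" and "rtt_rel \<iota> n (Lm tm) Y"
    and "a \<in> {1..n}" "b \<in> {1..n}" "c \<in> {1..n}" "d \<in> {1..n}"
  shows "\<iota> (if a = c then - inverse vv else - 1) * tm a b 0 * Y c d q
      + (if c < a then \<iota> (vv - inverse vv) * tm c b 0 * Y a d q else 0)
    = Y c d q * tm a b 0 * \<iota> (if b = d then - inverse vv else - 1)
      + (if b < d then Y c b q * tm a d 0 * \<iota> (vv - inverse vv) else 0)"
  using rtt_rel_entry[OF cv assms(2-), of 0 "q + 1"]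
  by (simp only: Lm_simps diff_0 add_diff_cancel_right' mult_zero_left mult_zero_right if_cancel add_0_left)

definition commutes_with :: "'b::ring_1 \<Rightarrow> 'b \<Rightarrow> 'b \<Rightarrow> bool" where
  "commutes_with X Y x \<longleftrightarrow> x * X = X * x \<and> x * Y = Y * x"

text \<open>The relations between X = t+_{i,i+1}[0], Y = t+_{ii}[0] and the column pair
  (x1, x2) = (t_{ki}, t_{k,i+1}) for k < i; \<open>f_exchange\<close> is the row version for
  X = t-_{i+1,i}[0], Y = t-_{ii}[0] and (x1, x2) = (t_{ik}, t_{i+1,k}).\<close>
definition e_exchange :: "(cv \<Rightarrow> 'b::ring_1) \<Rightarrow> 'b \<Rightarrow> 'b \<Rightarrow> 'b \<Rightarrow> 'b \<Rightarrow> bool" where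
  "e_exchange \<iota> X Y x1 x2 \<longleftrightarrow> Y * x1 = \<iota> vv * x1 * Y \<and> Y * x2 = x2 * Y
     \<and> X * x1 = x1 * X + \<iota> (vv - inverse vv) * x2 * Y"

definition f_exchange :: "(cv \<Rightarrow> 'b::ring_1) \<Rightarrow> 'b \<Rightarrow> 'b \<Rightarrow> 'b \<Rightarrow> 'b \<Rightarrow> bool" where
  "f_exchange \<iota> X Y x1 x2 \<longleftrightarrow> Y * x1 = \<iota> vv * x1 * Y \<and> Y * x2 = x2 * Y
     \<and> x1 * X = X * x1 - \<iota> (vv - inverse vv) * Y * x2"

lemma e_exchange_tp:
  assumes cv: "cv_algebra \<iota>" and m: "rtt_model \<iota> n tp tm" and i: "1 \<le> i" "i < n"
  shows "k \<in> {1..<i} \<Longrightarrow> e_exchange \<iota> (tp i (i+1) 0) (tp i i 0) (tp k i s) (tp k (i+1) s)"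
    and "c \<in> {1..<i} \<Longrightarrow> d \<in> {1..<i} \<Longrightarrow> commutes_with (tp i (i+1) 0) (tp i i 0) (tp c d s)"
proof -
  note rel = rtt_tp0_tp[OF cv m]
  assume k: "k \<in> {1..<i}"
  have "tp i (i+1) 0 * tp k i s = tp k i s * tp i (i+1) 0 + tp k (i+1) s * tp i i 0 * \<iota> (vv - inverse vv)"
    using rel[of i "i+1" k i s] i k by (simp add: cv_algebra_hom(2)[OF cv])
  moreover have "tp i i 0 * tp k i s = tp k i s * tp i i 0 * \<iota> vv"
    using rel[of i i k i s] i k by (simp add: cv_algebra_hom(2)[OF cv])
  moreover have "tp i i 0 * tp k (i+1) s = tp k (i+1) s * tp i i 0"
    using rel[of i i k "i+1" s] i k by (simp add: cv_algebra_hom(2)[OF cv])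
  ultimately show "e_exchange \<iota> (tp i (i+1) 0) (tp i i 0) (tp k i s) (tp k (i+1) s)"
    unfolding e_exchange_def by (simp only: cv_algebra_central(2)[OF cv])
next
  note rel = rtt_tp0_tp[OF cv m]
  assume cd: "c \<in> {1..<i}" "d \<in> {1..<i}"
  have "tp i d 0 = 0"
    using rtt_model_D(4)[OF m, of i d] i cd by simp
  then show "commutes_with (tp i (i+1) 0) (tp i i 0) (tp c d s)"
    using rel[of i "i+1" c d s] rel[of i i c d s] i cd
    unfolding commutes_with_def by (simp add: cv_algebra_hom(2)[OF cv])
qed

lemma e_exchange_tm:
  assumes cv: "cv_algebra \<iota>" and m: "rtt_model \<iota> n tp tm" and i: "1 \<le> i" "i < n"
  shows "k \<in> {1..<i} \<Longrightarrow> e_exchange \<iota> (tp i (i+1) 0) (tp i i 0) (tm k i s) (tm k (i+1) s)"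
    and "c \<in> {1..<i} \<Longrightarrow> d \<in> {1..<i} \<Longrightarrow> commutes_with (tp i (i+1) 0) (tp i i 0) (tm c d s)"
proof -
  note rel = rtt_tm_tp0[OF cv m]
  note hom = cv_algebra_hom[OF cv]
  assume k: "k \<in> {1..<i}"
  have c: "tp i i 0 * tm k (i+1) s = tm k (i+1) s * tp i i 0"
    using rel[of k "i+1" i i s] i k by (simp add: hom)
  have "tp i (i+1) 0 * tm k i s = tm k i s * tp i (i+1) 0 + tp i i 0 * tm k (i+1) s * \<iota> (vv - inverse vv)"
    using rel[of k i i "i+1" s] i k by (simp add: hom algebra_simps)
  then have a: "tp i (i+1) 0 * tm k i s = tm k i s * tp i (i+1) 0 + \<iota> (vv - inverse vv) * tm k (i+1) s * tp i i 0"
    by (simp only: c cv_algebra_central(2)[OF cv])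
  have "tm k i s * tp i i 0 = tp i i 0 * tm k i s * \<iota> (inverse vv)"
    using rel[of k i i i s] i k by (simp add: hom)
  then have b: "tp i i 0 * tm k i s = \<iota> vv * tm k i s * tp i i 0"
    using cv_algebra_vv_inverse[OF cv]
    by (metis (no_types, lifting) cv_algebra_central(2)[OF cv] mult.assoc mult_1_right)
  show "e_exchange \<iota> (tp i (i+1) 0) (tp i i 0) (tm k i s) (tm k (i+1) s)"
    unfolding e_exchange_def using a b c by blast
next
  note rel = rtt_tm_tp0[OF cv m]
  assume cd: "c \<in> {1..<i}" "d \<in> {1..<i}"
  have "tp i d 0 = 0"
    using rtt_model_D(4)[OF m, of i d] i cd by simp
  then show "commutes_with (tp i (i+1) 0) (tp i i 0) (tm c d s)"
    using rel[of c d i "i+1" s] rel[of c d i i s] i cd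
    unfolding commutes_with_def by (simp add: cv_algebra_hom[OF cv])
qed

lemma f_exchange_tm0:
  assumes cv: "cv_algebra \<iota>" and m: "rtt_model \<iota> n tp tm" and i: "1 \<le> i" "i < n"
    and rel: "rtt_rel \<iota> n (Lm tm) Y"
  shows "k \<in> {1..<i} \<Longrightarrow> f_exchange \<iota> (tm (i+1) i 0) (tm i i 0) (Y i k q) (Y (i+1) k q)"
    and "c \<in> {1..<i} \<Longrightarrow> d \<in> {1..<i} \<Longrightarrow> commutes_with (tm (i+1) i 0) (tm i i 0) (Y c d q)"
proof -
  note rel = rtt_tm0[OF cv rel]
  note hom = cv_algebra_hom[OF cv]
  assume k: "k \<in> {1..<i}"
  have "tm (i+1) i 0 * Y i k q = Y i k q * tm (i+1) i 0 + \<iota> (vv - inverse vv) * tm i i 0 * Y (i+1) k q"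
    using rel[of "i+1" i i k q] i k by (simp add: hom algebra_simps)
  then have a: "Y i k q * tm (i+1) i 0 = tm (i+1) i 0 * Y i k q - \<iota> (vv - inverse vv) * tm i i 0 * Y (i+1) k q"
    by (simp add: algebra_simps)
  have "\<iota> (inverse vv) * tm i i 0 * Y i k q = Y i k q * tm i i 0"
    using rel[of i i i k q] i k by (simp add: hom)
  then have b: "tm i i 0 * Y i k q = \<iota> vv * Y i k q * tm i i 0"
    using cv_algebra_vv_inverse(1)[OF cv] by (metis mult.assoc mult_1_left)
  have c: "tm i i 0 * Y (i+1) k q = Y (i+1) k q * tm i i 0"
    using rel[of i i "i+1" k q] i k by (simp add: hom)
  show "f_exchange \<iota> (tm (i+1) i 0) (tm i i 0) (Y i k q) (Y (i+1) k q)"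
    unfolding f_exchange_def using a b c by blast
next
  assume cd: "c \<in> {1..<i}" "d \<in> {1..<i}"
  have "tm c i 0 = 0"
    using rtt_model_D(5)[OF m, of i c] i cd by simp
  then show "commutes_with (tm (i+1) i 0) (tm i i 0) (Y c d q)"
    using rtt_tm0[OF cv rel, of "i+1" i c d q] rtt_tm0[OF cv rel, of i i c d q] i cd
    unfolding commutes_with_def by (simp add: cv_algebra_hom[OF cv])
qed

lemma commutes_with_0: "commutes_with X Y 0"
  unfolding commutes_with_def by simp

lemma commutes_with_add: "commutes_with X Y a \<Longrightarrow> commutes_with X Y b \<Longrightarrow> commutes_with X Y (a + b)"
  unfolding commutes_with_def by (simp add: distrib_left distrib_right)

lemma commutes_with_diff: "commutes_with X Y a \<Longrightarrow> commutes_with X Y b \<Longrightarrow> commutes_with X Y (a - b)"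
  unfolding commutes_with_def by (simp add: left_diff_distrib right_diff_distrib)

lemma commutes_with_mult: "commutes_with X Y a \<Longrightarrow> commutes_with X Y b \<Longrightarrow> commutes_with X Y (a * b)"
  unfolding commutes_with_def by (metis mult.assoc)

lemma commutes_with_sum:
  "finite A \<Longrightarrow> (\<And>x. x \<in> A \<Longrightarrow> commutes_with X Y (f x)) \<Longrightarrow> commutes_with X Y (sum f A)"
  by (induction A rule: finite_induct) (auto intro: commutes_with_0 commutes_with_add)

lemma commutes_with_inverse:
  assumes "commutes_with X Y g" "g * h = 1" "h * g = 1"
  shows "commutes_with X Y h"
proof -
  have "h * Z = Z * h" if "g * Z = Z * g" for Z
  proof -
    have "h * Z = h * Z * (g * h)" using assms(2) by simp
    also have "\<dots> = h * (g * Z) * h" by (simp only: that mult.assoc)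
    also have "\<dots> = Z * h" using assms(3) by (simp flip: mult.assoc)
    finally show ?thesis .
  qed
  then show ?thesis using assms(1) unfolding commutes_with_def by metis
qed

lemma commutes_with_conv3:
  assumes "\<And>p. commutes_with X Y (F p)" "\<And>q. commutes_with X Y (G q)" "\<And>u. commutes_with X Y (E u)"
  shows "commutes_with X Y (conv3 F G E s)"
  unfolding conv3_def by (intro commutes_with_sum finite_atMost commutes_with_mult assms)

lemma e_exchange_0: "e_exchange \<iota> X Y 0 0"
  unfolding e_exchange_def by simp

lemma e_exchange_add:
  "e_exchange \<iota> X Y a1 a2 \<Longrightarrow> e_exchange \<iota> X Y b1 b2 \<Longrightarrow> e_exchange \<iota> X Y (a1 + b1) (a2 + b2)"
  unfolding e_exchange_def
  by (elim conjE, intro conjI) (simp_all only: distrib_left distrib_right diff_conv_add_uminus minus_add add_ac)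

lemma e_exchange_minus: "e_exchange \<iota> X Y a1 a2 \<Longrightarrow> e_exchange \<iota> X Y (- a1) (- a2)"
  unfolding e_exchange_def by simp

lemma e_exchange_diff:
  "e_exchange \<iota> X Y a1 a2 \<Longrightarrow> e_exchange \<iota> X Y b1 b2 \<Longrightarrow> e_exchange \<iota> X Y (a1 - b1) (a2 - b2)"
  unfolding diff_conv_add_uminus by (intro e_exchange_add e_exchange_minus)

lemma e_exchange_sum:
  "finite A \<Longrightarrow> (\<And>x. x \<in> A \<Longrightarrow> e_exchange \<iota> X Y (f x) (g x)) \<Longrightarrow> e_exchange \<iota> X Y (sum f A) (sum g A)"
  by (induction A rule: finite_induct) (auto intro: e_exchange_0 e_exchange_add)

lemma e_exchange_mult_left:
  assumes cv: "cv_algebra \<iota>" and x: "commutes_with X Y x" and e: "e_exchange \<iota> X Y a1 a2"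
  shows "e_exchange \<iota> X Y (x * a1) (x * a2)"
proof -
  have xX: "X * x = x * X" and xY: "Y * x = x * Y"
    using x unfolding commutes_with_def by auto
  have "Y * (x * a1) = x * (Y * a1)" "Y * (x * a2) = x * (Y * a2)" "X * (x * a1) = x * (X * a1)"
    by (simp_all add: xX xY flip: mult.assoc)
  then show ?thesis
    using e unfolding e_exchange_def
    by (simp add: distrib_left cv_algebra_central[OF cv] mult.assoc)
qed

lemma f_exchange_0: "f_exchange \<iota> X Y 0 0"
  unfolding f_exchange_def by simp

lemma f_exchange_add:
  "f_exchange \<iota> X Y a1 a2 \<Longrightarrow> f_exchange \<iota> X Y b1 b2 \<Longrightarrow> f_exchange \<iota> X Y (a1 + b1) (a2 + b2)"
  unfolding f_exchange_def
  by (elim conjE, intro conjI) (simp_all only: distrib_left distrib_right diff_conv_add_uminus minus_add add_ac)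

lemma f_exchange_minus: "f_exchange \<iota> X Y a1 a2 \<Longrightarrow> f_exchange \<iota> X Y (- a1) (- a2)"
  unfolding f_exchange_def by simp

lemma f_exchange_diff:
  "f_exchange \<iota> X Y a1 a2 \<Longrightarrow> f_exchange \<iota> X Y b1 b2 \<Longrightarrow> f_exchange \<iota> X Y (a1 - b1) (a2 - b2)"
  unfolding diff_conv_add_uminus by (intro f_exchange_add f_exchange_minus)

lemma f_exchange_sum:
  "finite A \<Longrightarrow> (\<And>x. x \<in> A \<Longrightarrow> f_exchange \<iota> X Y (f x) (g x)) \<Longrightarrow> f_exchange \<iota> X Y (sum f A) (sum g A)"
  by (induction A rule: finite_induct) (auto intro: f_exchange_0 f_exchange_add)

lemma f_exchange_mult_right:
  assumes x: "commutes_with X Y x" and f: "f_exchange \<iota> X Y a1 a2"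
  shows "f_exchange \<iota> X Y (a1 * x) (a2 * x)"
proof -
  have xX: "x * X = X * x" and xY: "x * Y = Y * x"
    using x unfolding commutes_with_def by auto
  have f3: "a1 * X = X * a1 - \<iota> (vv - inverse vv) * Y * a2"
    using f unfolding f_exchange_def by blast
  have "Y * (a1 * x) = \<iota> vv * (a1 * x) * Y" "Y * (a2 * x) = a2 * x * Y"
    using f xY unfolding f_exchange_def by (metis mult.assoc)+
  moreover have "a1 * x * X = X * (a1 * x) - \<iota> (vv - inverse vv) * Y * (a2 * x)"
  proof -
    have "a1 * x * X = (a1 * X) * x"
      by (simp add: xX mult.assoc)
    also have "\<dots> = X * (a1 * x) - \<iota> (vv - inverse vv) * Y * (a2 * x)"
      using f3 by (simp only: left_diff_distrib mult.assoc)
    finally show ?thesis .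
  qed
  ultimately show ?thesis
    unfolding f_exchange_def by blast
qed

lemma e_exchange_conv3:
  assumes cv: "cv_algebra \<iota>" and "\<And>p. commutes_with X Y (F p)" "\<And>q. commutes_with X Y (G q)"
    and "\<And>u. e_exchange \<iota> X Y (E1 u) (E2 u)"
  shows "e_exchange \<iota> X Y (conv3 F G E1 s) (conv3 F G E2 s)"
  unfolding conv3_def by (intro e_exchange_sum finite_atMost e_exchange_mult_left[OF cv] commutes_with_mult assms)

lemma f_exchange_conv3:
  assumes "\<And>p. f_exchange \<iota> X Y (F1 p) (F2 p)" "\<And>q. commutes_with X Y (G q)"
    and "\<And>u. commutes_with X Y (E u)"
  shows "f_exchange \<iota> X Y (conv3 F1 G E s) (conv3 F2 G E s)"
  unfolding conv3_def mult.assoc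
  by (intro f_exchange_sum finite_atMost f_exchange_mult_right commutes_with_mult assms)

lemma conv3_unit_left:
  fixes G E :: "nat \<Rightarrow> 'b::ring_1"
  shows "conv3 (\<lambda>p. if p = 0 then 1 else 0) G E s = (\<Sum>q\<le>s. G q * E (s - q))"
proof -
  have "conv3 (\<lambda>p. if p = 0 then 1 else 0) G E s
      = (\<Sum>p\<le>s. if p = 0 then (\<Sum>q\<le>s - p. G q * E (s - p - q)) else 0)"
    unfolding conv3_def by (intro sum.cong refl) (simp add: if_distrib[of "\<lambda>z. z * _"])
  then show ?thesis by simp
qed

lemma conv3_unit_right:
  fixes F G :: "nat \<Rightarrow> 'b::ring_1"
  shows "conv3 F G (\<lambda>u. if u = 0 then 1 else 0) s = (\<Sum>p\<le>s. F p * G (s - p))"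
  unfolding conv3_def
proof (intro sum.cong refl)
  fix p assume "p \<in> {..s}"
  have "(\<Sum>q\<le>s - p. F p * G q * (if s - p - q = 0 then 1 else 0))
      = (\<Sum>q\<le>s - p. if q = s - p then F p * G q else 0)"
    by (intro sum.cong refl) auto
  then show "(\<Sum>q\<le>s - p. F p * G q * (if s - p - q = 0 then 1 else 0)) = F p * G (s - p)"
    by simp
qed

lemma sum_atMost_split_first: "(\<Sum>q\<le>(s::nat). f q) = f 0 + (\<Sum>q\<in>{1..s}. f q)"
proof -
  have "{..s} = insert 0 {1..s}" by auto
  then show ?thesis by simp
qed

lemma sum_atLeast1_split_last:
  "(\<Sum>k\<in>{1..(m::nat)}. f k) = (\<Sum>k\<in>{1..<m}. f k) + (if 1 \<le> m then f m else 0)"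
proof (cases "1 \<le> m")
  case True
  then have "{1..m} = insert m {1..<m}" by auto
  then show ?thesis using True by (simp add: add.commute)
qed simp

lemma eq_solve_left_factor:
  fixes T L g x R gi :: "'b::ring_1"
  assumes "T = L + g * x + R" "gi * g = 1"
  shows "x = gi * (T - L - R)"
proof -
  have "gi * (T - L - R) = gi * g * x"
    using assms(1) by (simp add: mult.assoc)
  then show ?thesis using assms(2) by simp
qed

lemma eq_solve_right_factor:
  fixes T L g x R gi :: "'b::ring_1"
  assumes "T = L + x * g + R" "g * gi = 1"
  shows "x = (T - L - R) * gi"
proof -
  have "(T - L - R) * gi = x * (g * gi)"
    using assms(1) by (simp add: mult.assoc)
  then show ?thesis using assms(2) by simp
qed

text \<open>Both T+ and T- of the
  Gauss decomposition are of this form.\<close>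
definition gauss_factorization :: "nat \<Rightarrow> (nat \<Rightarrow> nat \<Rightarrow> nat \<Rightarrow> 'b::ring_1)
    \<Rightarrow> (nat \<Rightarrow> nat \<Rightarrow> nat \<Rightarrow> 'b) \<Rightarrow> (nat \<Rightarrow> nat \<Rightarrow> 'b) \<Rightarrow> (nat \<Rightarrow> nat \<Rightarrow> nat \<Rightarrow> 'b) \<Rightarrow> (nat \<Rightarrow> 'b) \<Rightarrow> bool"
  where
  "gauss_factorization N T Fc G Ec Gi \<longleftrightarrow>
    (\<forall>a\<in>{1..N}. \<forall>b\<in>{1..N}. \<forall>s. T a b s = (\<Sum>k\<in>{1..min a b}. conv3 (Fc a k) (G k) (Ec k b) s)) \<and>
    (\<forall>a p. Fc a a p = (if p = 0 then 1 else 0)) \<and>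
    (\<forall>k u. Ec k k u = (if u = 0 then 1 else 0)) \<and>
    (\<forall>k\<in>{1..N}. G k 0 * Gi k = 1 \<and> Gi k * G k 0 = 1)"

lemma gauss_factorization_D:
  assumes "gauss_factorization N T Fc G Ec Gi"
  shows "\<And>a b s. a \<in> {1..N} \<Longrightarrow> b \<in> {1..N} \<Longrightarrow>
      T a b s = (\<Sum>k\<in>{1..min a b}. conv3 (Fc a k) (G k) (Ec k b) s)"
    "Fc a a = (\<lambda>p. if p = 0 then 1 else 0)" "Ec k k = (\<lambda>u. if u = 0 then 1 else 0)"
    "\<And>k. k \<in> {1..N} \<Longrightarrow> G k 0 * Gi k = 1" "\<And>k. k \<in> {1..N} \<Longrightarrow> Gi k * G k 0 = 1"
  using assms unfolding gauss_factorization_def by auto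

lemma gauss_factorization_split:
  assumes g: "gauss_factorization N T Fc G Ec Gi" and "a \<in> {1..N}" "b \<in> {1..N}"
  shows "T a b s = (\<Sum>k\<in>{1..<min a b}. conv3 (Fc a k) (G k) (Ec k b) s)
      + conv3 (Fc a (min a b)) (G (min a b)) (Ec (min a b) b) s"
proof -
  have "1 \<le> min a b" using assms(2,3) by simp
  then show ?thesis
    using gauss_factorization_D(1)[OF assms] by (simp only: sum_atLeast1_split_last if_True)
qed

lemma gauss_factorization_diagonal:
  assumes g: "gauss_factorization N T Fc G Ec Gi" and m: "m \<in> {1..N}"
  shows "G m s = T m m s - (\<Sum>k\<in>{1..<m}. conv3 (Fc m k) (G k) (Ec k m) s)"
proof -
  have "(\<Sum>q\<le>s. G m q * (if s - q = 0 then 1 else 0)) = (\<Sum>q\<le>s. if q = s then G m q else 0)"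
    by (intro sum.cong refl) auto
  then show ?thesis
    using gauss_factorization_split[OF g m m, of s]
    by (simp add: gauss_factorization_D(2,3)[OF g] conv3_unit_left)
qed

lemma gauss_factorization_upper:
  assumes g: "gauss_factorization N T Fc G Ec Gi" and mb: "m \<in> {1..N}" "b \<in> {1..N}" "m \<le> b"
  shows "Ec m b s = Gi m * (T m b s - (\<Sum>k\<in>{1..<m}. conv3 (Fc m k) (G k) (Ec k b) s)
                                     - (\<Sum>q\<in>{1..s}. G m q * Ec m b (s - q)))"
proof (rule eq_solve_left_factor)
  show "T m b s = (\<Sum>k\<in>{1..<m}. conv3 (Fc m k) (G k) (Ec k b) s) + G m 0 * Ec m b s
      + (\<Sum>q\<in>{1..s}. G m q * Ec m b (s - q))"
    using gauss_factorization_split[OF g mb(1,2), of s] mb(3)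
    by (simp add: gauss_factorization_D(2)[OF g] conv3_unit_left sum_atMost_split_first add.assoc)
  show "Gi m * G m 0 = 1"
    using gauss_factorization_D(5)[OF g mb(1)] .
qed

lemma gauss_factorization_lower:
  assumes g: "gauss_factorization N T Fc G Ec Gi" and ma: "m \<in> {1..N}" "a \<in> {1..N}" "m \<le> a"
  shows "Fc a m s = (T a m s - (\<Sum>k\<in>{1..<m}. conv3 (Fc a k) (G k) (Ec k m) s)
                             - (\<Sum>p<s. Fc a m p * G m (s - p))) * Gi m"
proof (rule eq_solve_right_factor)
  show "T a m s = (\<Sum>k\<in>{1..<m}. conv3 (Fc a k) (G k) (Ec k m) s) + Fc a m s * G m 0
      + (\<Sum>p<s. Fc a m p * G m (s - p))"
    using gauss_factorization_split[OF g ma(2,1), of s] ma(3)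
    by (simp add: min_absorb2 gauss_factorization_D(3)[OF g] conv3_unit_right
        lessThan_Suc_atMost[symmetric] add.assoc)
  show "G m 0 * Gi m = 1"
    using gauss_factorization_D(4)[OF g ma(1)] .
qed

lemma gauss_upper_commutes:
  assumes g: "gauss_factorization N T Fc G Ec Gi" and mb: "m \<in> {1..N}" "b \<in> {1..N}" "m \<le> b"
    and T: "\<And>s. commutes_with X Y (T m b s)"
    and lower: "\<And>s. commutes_with X Y (\<Sum>k\<in>{1..<m}. conv3 (Fc m k) (G k) (Ec k b) s)"
    and G: "\<And>q. commutes_with X Y (G m q)" and Gi: "commutes_with X Y (Gi m)"
  shows "commutes_with X Y (Ec m b s)"
proof (induction s rule: less_induct)
  case (less s)
  have "commutes_with X Y (\<Sum>q\<in>{1..s}. G m q * Ec m b (s - q))"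
    by (intro commutes_with_sum commutes_with_mult G less) auto
  then show ?case
    by (subst gauss_factorization_upper[OF g mb]) (intro commutes_with_mult commutes_with_diff Gi T lower)
qed

lemma gauss_lower_commutes:
  assumes g: "gauss_factorization N T Fc G Ec Gi" and ma: "m \<in> {1..N}" "a \<in> {1..N}" "m \<le> a"
    and T: "\<And>s. commutes_with X Y (T a m s)"
    and lower: "\<And>s. commutes_with X Y (\<Sum>k\<in>{1..<m}. conv3 (Fc a k) (G k) (Ec k m) s)"
    and G: "\<And>q. commutes_with X Y (G m q)" and Gi: "commutes_with X Y (Gi m)"
  shows "commutes_with X Y (Fc a m s)"
proof (induction s rule: less_induct)
  case (less s)
  have "commutes_with X Y (\<Sum>p<s. Fc a m p * G m (s - p))"
    by (intro commutes_with_sum commutes_with_mult G less) auto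
  then show ?case
    by (subst gauss_factorization_lower[OF g ma]) (intro commutes_with_mult commutes_with_diff Gi T lower)
qed

lemma gauss_commutes:
  assumes g: "gauss_factorization N T Fc G Ec Gi" and M: "M \<le> N"
    and T: "\<And>a b s. a \<in> {1..M} \<Longrightarrow> b \<in> {1..M} \<Longrightarrow> commutes_with X Y (T a b s)"
  shows "m \<in> {1..M} \<Longrightarrow> commutes_with X Y (G m s)
    \<and> (\<forall>b\<in>{m..M}. commutes_with X Y (Ec m b s)) \<and> (\<forall>a\<in>{m..M}. commutes_with X Y (Fc a m s))"
proof (induction m arbitrary: s rule: less_induct)
  case (less m)
  have mN: "m \<in> {1..N}" using less.prems M by auto
  have lower: "commutes_with X Y (\<Sum>k\<in>{1..<m}. conv3 (Fc a k) (G k) (Ec k b) s')"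
    if "a \<in> {m..M}" "b \<in> {m..M}" for a b s'
  proof (intro commutes_with_sum commutes_with_conv3)
    fix k assume "k \<in> {1..<m}"
    then show "commutes_with X Y (Fc a k p)" "commutes_with X Y (G k q)" "commutes_with X Y (Ec k b u)"
      for p q u
      using less.IH[of k] less.prems that by auto
  qed simp
  have G: "commutes_with X Y (G m q)" for q
    using less.prems
    by (subst gauss_factorization_diagonal[OF g mN]) (intro commutes_with_diff T lower; simp)
  have Gi: "commutes_with X Y (Gi m)"
    using G gauss_factorization_D(4,5)[OF g mN] by (rule commutes_with_inverse)
  have "commutes_with X Y (Ec m b s)" if "b \<in> {m..M}" for b
    using that less.prems M
    by (intro gauss_upper_commutes[OF g] T lower G Gi) auto
  moreover have "commutes_with X Y (Fc a m s)" if "a \<in> {m..M}" for a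
    using that less.prems M
    by (intro gauss_lower_commutes[OF g] T lower G Gi) auto
  ultimately show ?case using G by blast
qed

lemma gauss_upper_e_exchange:
  assumes cv: "cv_algebra \<iota>" and g: "gauss_factorization N T Fc G Ec Gi"
    and mb: "m \<in> {1..N}" "b1 \<in> {1..N}" "m \<le> b1" "b2 \<in> {1..N}" "m \<le> b2"
    and T: "\<And>s. e_exchange \<iota> X Y (T m b1 s) (T m b2 s)"
    and lower: "\<And>s. e_exchange \<iota> X Y (\<Sum>k\<in>{1..<m}. conv3 (Fc m k) (G k) (Ec k b1) s)
                                     (\<Sum>k\<in>{1..<m}. conv3 (Fc m k) (G k) (Ec k b2) s)"
    and G: "\<And>q. commutes_with X Y (G m q)" and Gi: "commutes_with X Y (Gi m)"
  shows "e_exchange \<iota> X Y (Ec m b1 s) (Ec m b2 s)"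
proof (induction s rule: less_induct)
  case (less s)
  have "e_exchange \<iota> X Y (\<Sum>q\<in>{1..s}. G m q * Ec m b1 (s - q)) (\<Sum>q\<in>{1..s}. G m q * Ec m b2 (s - q))"
    by (intro e_exchange_sum e_exchange_mult_left[OF cv] G less) auto
  then show ?case
    unfolding gauss_factorization_upper[OF g mb(1-3), of s] gauss_factorization_upper[OF g mb(1,4,5), of s]
    by (intro e_exchange_mult_left[OF cv Gi] e_exchange_diff T lower)
qed

lemma gauss_lower_f_exchange:
  assumes g: "gauss_factorization N T Fc G Ec Gi"
    and ma: "m \<in> {1..N}" "a1 \<in> {1..N}" "m \<le> a1" "a2 \<in> {1..N}" "m \<le> a2"
    and T: "\<And>s. f_exchange \<iota> X Y (T a1 m s) (T a2 m s)"
    and lower: "\<And>s. f_exchange \<iota> X Y (\<Sum>k\<in>{1..<m}. conv3 (Fc a1 k) (G k) (Ec k m) s)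
                                     (\<Sum>k\<in>{1..<m}. conv3 (Fc a2 k) (G k) (Ec k m) s)"
    and G: "\<And>q. commutes_with X Y (G m q)" and Gi: "commutes_with X Y (Gi m)"
  shows "f_exchange \<iota> X Y (Fc a1 m s) (Fc a2 m s)"
proof (induction s rule: less_induct)
  case (less s)
  have "f_exchange \<iota> X Y (\<Sum>p<s. Fc a1 m p * G m (s - p)) (\<Sum>p<s. Fc a2 m p * G m (s - p))"
    by (intro f_exchange_sum f_exchange_mult_right G less) auto
  then show ?case
    unfolding gauss_factorization_lower[OF g ma(1-3), of s] gauss_factorization_lower[OF g ma(1,4,5), of s]
    by (intro f_exchange_mult_right[OF Gi] f_exchange_diff T lower)
qed

lemma gauss_e_exchange:
  assumes cv: "cv_algebra \<iota>" and g: "gauss_factorization N T Fc G Ec Gi" and M: "M \<le> N"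
    and comm: "\<And>a b s. a \<in> {1..M} \<Longrightarrow> b \<in> {1..M} \<Longrightarrow> commutes_with X Y (T a b s)"
    and b: "b1 \<in> {M<..N}" "b2 \<in> {M<..N}"
    and T: "\<And>a s. a \<in> {1..M} \<Longrightarrow> e_exchange \<iota> X Y (T a b1 s) (T a b2 s)"
  shows "m \<in> {1..M} \<Longrightarrow> e_exchange \<iota> X Y (Ec m b1 s) (Ec m b2 s)"
proof (induction m arbitrary: s rule: less_induct)
  case (less m)
  have block: "commutes_with X Y (G k s) \<and> (\<forall>b\<in>{k..M}. commutes_with X Y (Ec k b s))
      \<and> (\<forall>a\<in>{k..M}. commutes_with X Y (Fc a k s))" if "k \<in> {1..M}" for k s
    by (rule gauss_commutes[OF g M comm that])
  have Gi: "commutes_with X Y (Gi m)"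
    using less.prems M
    by (intro commutes_with_inverse[OF conjunct1[OF block[of m 0]]] gauss_factorization_D(4,5)[OF g]) auto
  have lower: "e_exchange \<iota> X Y (\<Sum>k\<in>{1..<m}. conv3 (Fc m k) (G k) (Ec k b1) s')
                                  (\<Sum>k\<in>{1..<m}. conv3 (Fc m k) (G k) (Ec k b2) s')" for s'
  proof (intro e_exchange_sum e_exchange_conv3[OF cv])
    fix k assume "k \<in> {1..<m}"
    then show "commutes_with X Y (Fc m k p)" "commutes_with X Y (G k q)"
      "e_exchange \<iota> X Y (Ec k b1 u) (Ec k b2 u)" for p q u
      using block[of k] less.IH[of k] less.prems by auto
  qed simp
  show ?case
    using less.prems M b block[OF less.prems]
    by (intro gauss_upper_e_exchange[OF cv g] T lower Gi) auto
qed

lemma gauss_f_exchange: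
  assumes g: "gauss_factorization N T Fc G Ec Gi" and M: "M \<le> N"
    and comm: "\<And>a b s. a \<in> {1..M} \<Longrightarrow> b \<in> {1..M} \<Longrightarrow> commutes_with X Y (T a b s)"
    and a: "a1 \<in> {M<..N}" "a2 \<in> {M<..N}"
    and T: "\<And>b s. b \<in> {1..M} \<Longrightarrow> f_exchange \<iota> X Y (T a1 b s) (T a2 b s)"
  shows "m \<in> {1..M} \<Longrightarrow> f_exchange \<iota> X Y (Fc a1 m s) (Fc a2 m s)"
proof (induction m arbitrary: s rule: less_induct)
  case (less m)
  have block: "commutes_with X Y (G k s) \<and> (\<forall>b\<in>{k..M}. commutes_with X Y (Ec k b s))
      \<and> (\<forall>a\<in>{k..M}. commutes_with X Y (Fc a k s))" if "k \<in> {1..M}" for k s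
    by (rule gauss_commutes[OF g M comm that])
  have Gi: "commutes_with X Y (Gi m)"
    using less.prems M
    by (intro commutes_with_inverse[OF conjunct1[OF block[of m 0]]] gauss_factorization_D(4,5)[OF g]) auto
  have lower: "f_exchange \<iota> X Y (\<Sum>k\<in>{1..<m}. conv3 (Fc a1 k) (G k) (Ec k m) s')
                                  (\<Sum>k\<in>{1..<m}. conv3 (Fc a2 k) (G k) (Ec k m) s')" for s'
  proof (intro f_exchange_sum f_exchange_conv3)
    fix k assume "k \<in> {1..<m}"
    then show "f_exchange \<iota> X Y (Fc a1 k p) (Fc a2 k p)" "commutes_with X Y (G k q)"
      "commutes_with X Y (Ec k m u)" for p q u
      using block[of k] less.IH[of k] less.prems by auto
  qed simp
  show ?case
    using less.prems M a block[OF less.prems]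
    by (intro gauss_lower_f_exchange[OF g] T lower Gi) auto
qed

lemma gauss_e_exchange_column:
  assumes cv: "cv_algebra \<iota>" and g: "gauss_factorization N T Fc G Ec Gi" and i: "1 \<le> i" "i < N"
    and comm: "\<And>c d s. c \<in> {1..<i} \<Longrightarrow> d \<in> {1..<i} \<Longrightarrow> commutes_with X Y (T c d s)"
    and T: "\<And>k s. k \<in> {1..<i} \<Longrightarrow> e_exchange \<iota> X Y (T k i s) (T k (i+1) s)"
    and j: "j \<in> {1..<i}"
  shows "e_exchange \<iota> X Y (Ec j i s) (Ec j (i+1) s)"
proof (rule gauss_e_exchange[OF cv g, of "i - 1"])
  show "\<And>a b s. a \<in> {1..i - 1} \<Longrightarrow> b \<in> {1..i - 1} \<Longrightarrow> commutes_with X Y (T a b s)"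
    by (rule comm) auto
  show "\<And>a s. a \<in> {1..i - 1} \<Longrightarrow> e_exchange \<iota> X Y (T a i s) (T a (i + 1) s)"
    by (rule T) auto
qed (use i j in auto)

lemma gauss_f_exchange_row:
  assumes g: "gauss_factorization N T Fc G Ec Gi" and i: "1 \<le> i" "i < N"
    and comm: "\<And>c d s. c \<in> {1..<i} \<Longrightarrow> d \<in> {1..<i} \<Longrightarrow> commutes_with X Y (T c d s)"
    and T: "\<And>k s. k \<in> {1..<i} \<Longrightarrow> f_exchange \<iota> X Y (T i k s) (T (i+1) k s)"
    and j: "j \<in> {1..<i}"
  shows "f_exchange \<iota> X Y (Fc i j s) (Fc (i+1) j s)"
proof (rule gauss_f_exchange[OF g, of "i - 1"])
  show "\<And>a b s. a \<in> {1..i - 1} \<Longrightarrow> b \<in> {1..i - 1} \<Longrightarrow> commutes_with X Y (T a b s)"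
    by (rule comm) auto
  show "\<And>b s. b \<in> {1..i - 1} \<Longrightarrow> f_exchange \<iota> X Y (T i b s) (T (i + 1) b s)"
    by (rule T) auto
qed (use i j in auto)

lemma gauss_decomp_D:
  assumes "gauss_decomp n tp tm etil ftil gp gm" "a \<in> {1..n}" "b \<in> {1..n}"
  shows "tp a b s = (\<Sum>k\<in>{1..min a b}. conv3 (Fpc ftil a k) (gp k) (Epc etil k b) s)"
    "tm a b s = (\<Sum>k\<in>{1..min a b}. conv3 (Fmc ftil a k) (gm k) (Emc etil k b) s)"
  using assms unfolding gauss_decomp_def by blast+

lemma gauss_decomp_diagonal_0:
  assumes g: "gauss_decomp n tp tm etil ftil gp gm" and k: "k \<in> {1..n}"
  shows "gp k 0 = tp k k 0" "gm k 0 = tm k k 0"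
proof -
  have "tp k k 0 = (\<Sum>k'\<in>{1..k}. Fpc ftil k k' 0 * gp k' 0 * Epc etil k' k 0)"
    using gauss_decomp_D(1)[OF g k k, of 0] by (simp add: conv3_def)
  also have "\<dots> = (\<Sum>k'\<in>{1..k}. if k' = k then gp k 0 else 0)"
    by (intro sum.cong refl) (auto simp: Fpc_def Epc_def)
  finally show "gp k 0 = tp k k 0" using k by simp
  have "tm k k 0 = (\<Sum>k'\<in>{1..k}. Fmc ftil k k' 0 * gm k' 0 * Emc etil k' k 0)"
    using gauss_decomp_D(2)[OF g k k, of 0] by (simp add: conv3_def)
  also have "\<dots> = (\<Sum>k'\<in>{1..k}. if k' = k then gm k 0 else 0)"
    by (intro sum.cong refl) (auto simp: Fmc_def Emc_def)
  finally show "gm k 0 = tm k k 0" using k by simp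
qed

lemma gauss_factorization_plus:
  assumes m: "rtt_model \<iota> n tp tm" and g: "gauss_decomp n tp tm etil ftil gp gm"
  shows "gauss_factorization n tp (Fpc ftil) gp (Epc etil) (\<lambda>k. tm k k 0)"
  unfolding gauss_factorization_def
  using gauss_decomp_D(1)[OF g] gauss_decomp_diagonal_0(1)[OF g] rtt_model_D(6,7)[OF m]
  by (simp add: Fpc_def Epc_def)

lemma gauss_factorization_minus:
  assumes m: "rtt_model \<iota> n tp tm" and g: "gauss_decomp n tp tm etil ftil gp gm"
  shows "gauss_factorization n tm (Fmc ftil) gm (Emc etil) (\<lambda>k. tp k k 0)"
  unfolding gauss_factorization_def
  using gauss_decomp_D(2)[OF g] gauss_decomp_diagonal_0(2)[OF g] rtt_model_D(6,7)[OF m]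
  by (simp add: Fmc_def Emc_def)

lemma tp_simple_root_0:
  assumes m: "rtt_model \<iota> n tp tm" and g: "gauss_decomp n tp tm etil ftil gp gm"
    and i: "1 \<le> i" "i < n"
  shows "tp i (i+1) 0 = tp i i 0 * etil i (i+1) 0"
  using gauss_factorization_upper[OF gauss_factorization_plus[OF m g], of i "i+1" 0] i
    gauss_decomp_diagonal_0(1)[OF g, of i] rtt_model_D(6)[OF m, of i]
  by (auto simp: Fpc_def Epc_def conv3_def mult.assoc[symmetric])

lemma tm_simple_root_0:
  assumes m: "rtt_model \<iota> n tp tm" and g: "gauss_decomp n tp tm etil ftil gp gm"
    and i: "1 \<le> i" "i < n"
  shows "tm (i+1) i 0 = ftil (i+1) i 0 * tm i i 0"
  using gauss_factorization_lower[OF gauss_factorization_minus[OF m g], of i "i+1" 0] i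
    gauss_decomp_diagonal_0(2)[OF g, of i] rtt_model_D(6,7)[OF m, of i]
  by (auto simp: Fmc_def Emc_def conv3_def mult.assoc)

lemma etil_e_exchange:
  assumes cv: "cv_algebra \<iota>" and m: "rtt_model \<iota> n tp tm" and g: "gauss_decomp n tp tm etil ftil gp gm"
    and j: "1 \<le> j" "j < i" and i: "i < n"
  shows "e_exchange \<iota> (tp i (i+1) 0) (tp i i 0) (etil j i r) (etil j (i+1) r)"
proof (cases "0 \<le> r")
  case True
  have "e_exchange \<iota> (tp i (i+1) 0) (tp i i 0) (Epc etil j i (nat r)) (Epc etil j (i+1) (nat r))"
    using j i e_exchange_tp[OF cv m, of i]
    by (intro gauss_e_exchange_column[OF cv gauss_factorization_plus[OF m g]]) auto
  then show ?thesis using True j by (simp add: Epc_def)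
next
  case False
  have "e_exchange \<iota> (tp i (i+1) 0) (tp i i 0) (Emc etil j i (nat (- r))) (Emc etil j (i+1) (nat (- r)))"
    using j i e_exchange_tm[OF cv m, of i]
    by (intro gauss_e_exchange_column[OF cv gauss_factorization_minus[OF m g]]) auto
  then show ?thesis using False j by (simp add: Emc_def)
qed

lemma ftil_f_exchange:
  assumes cv: "cv_algebra \<iota>" and m: "rtt_model \<iota> n tp tm" and g: "gauss_decomp n tp tm etil ftil gp gm"
    and j: "1 \<le> j" "j < i" and i: "i < n"
  shows "f_exchange \<iota> (tm (i+1) i 0) (tm i i 0) (ftil i j r) (ftil (i+1) j r)"
proof (cases "0 < r")
  case True
  note rel = f_exchange_tm0[OF cv m _ _ rtt_model_D(3)[OF m], where q = "- int s" for s, unfolded Lp_simps]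
  have "f_exchange \<iota> (tm (i+1) i 0) (tm i i 0) (Fpc ftil i j (nat r)) (Fpc ftil (i+1) j (nat r))"
    using j i rel by (intro gauss_f_exchange_row[OF gauss_factorization_plus[OF m g]]) auto
  then show ?thesis using True j by (simp add: Fpc_def)
next
  case False
  note rel = f_exchange_tm0[OF cv m _ _ rtt_model_D(2)[OF m], where q = "int s" for s, unfolded Lm_simps]
  have "f_exchange \<iota> (tm (i+1) i 0) (tm i i 0) (Fmc ftil i j (nat (- r))) (Fmc ftil (i+1) j (nat (- r)))"
    using j i rel by (intro gauss_f_exchange_row[OF gauss_factorization_minus[OF m g]]) auto
  then show ?thesis using False j by (simp add: Fmc_def)
qed

lemma e_exchange_bracket:
  assumes cv: "cv_algebra \<iota>" and Y: "Y * Yi = 1" "Yi * Y = 1"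
    and e: "e_exchange \<iota> X Y e1 e2" and Z: "X = Y * Z"
  shows "Z * e1 - \<iota> (inverse vv) * e1 * Z = \<iota> (vv - inverse vv) * e2"
proof -
  have e1: "Y * e1 = \<iota> vv * e1 * Y" and e2: "Y * e2 = e2 * Y"
    and e3: "X * e1 = e1 * X + \<iota> (vv - inverse vv) * e2 * Y"
    using e unfolding e_exchange_def by auto
  have Zd: "Z = Yi * X" using Z Y by (simp add: mult.assoc[symmetric])
  have "e1 * Yi = Yi * (Y * e1) * Yi" using Y by (simp add: mult.assoc[symmetric])
  also have "\<dots> = \<iota> vv * (Yi * e1 * (Y * Yi))" by (simp only: e1 mult.assoc cv_algebra_central(1)[OF cv])
  finally have "e1 * Yi = \<iota> vv * (Yi * e1)" using Y by simp
  then have Yi_e1: "Yi * e1 = \<iota> (inverse vv) * (e1 * Yi)"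
    using cv_algebra_vv_inverse[OF cv] by (simp add: mult.assoc[symmetric])
  have Yi_e2: "Yi * (e2 * Y) = e2"
    using Y by (simp add: e2 flip: e2 mult.assoc)
  have "Z * e1 = Yi * (e1 * X) + \<iota> (vv - inverse vv) * (Yi * (e2 * Y))"
    by (simp add: Zd mult.assoc e3[unfolded mult.assoc] distrib_left cv_algebra_central(1)[OF cv])
  also have "\<dots> = \<iota> (inverse vv) * e1 * Z + \<iota> (vv - inverse vv) * e2"
    unfolding Yi_e2 by (simp only: Zd Yi_e1 mult.assoc[symmetric])
  finally show ?thesis by simp
qed

lemma f_exchange_bracket:
  assumes cv: "cv_algebra \<iota>" and Y: "Y * Yi = 1" "Yi * Y = 1"
    and f: "f_exchange \<iota> X Y f1 f2" and W: "X = W * Y"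
  shows "f1 * W - \<iota> vv * W * f1 = \<iota> (inverse vv - vv) * f2"
proof -
  have f1: "Y * f1 = \<iota> vv * f1 * Y" and f2: "Y * f2 = f2 * Y"
    and f3: "f1 * X = X * f1 - \<iota> (vv - inverse vv) * Y * f2"
    using f unfolding f_exchange_def by auto
  have Wd: "W = X * Yi" using W Y by (simp add: mult.assoc)
  have "f1 * Yi = Yi * (Y * f1) * Yi" using Y by (simp add: mult.assoc[symmetric])
  also have "\<dots> = \<iota> vv * (Yi * f1 * (Y * Yi))" by (simp only: f1 mult.assoc cv_algebra_central(1)[OF cv])
  finally have f1_Yi: "f1 * Yi = \<iota> vv * (Yi * f1)" using Y by simp
  have Y_f2: "Y * f2 * Yi = f2"
    using Y by (simp add: f2 mult.assoc)
  have "f1 * W = X * (f1 * Yi) - \<iota> (vv - inverse vv) * (Y * f2 * Yi)"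
    by (simp only: Wd f3 left_diff_distrib mult.assoc[symmetric])
  also have "\<dots> = \<iota> vv * W * f1 - \<iota> (vv - inverse vv) * f2"
    unfolding f1_Yi Y_f2 by (simp only: Wd mult.assoc cv_algebra_central(1)[OF cv])
  finally show ?thesis
    by (simp add: cv_algebra_hom[OF cv] algebra_simps)
qed

lemma etil_bracket:
  assumes cv: "cv_algebra \<iota>" and m: "rtt_model \<iota> n tp tm" and g: "gauss_decomp n tp tm etil ftil gp gm"
    and j: "1 \<le> j" "j < i" and i: "i < n"
  shows "etil i (i+1) 0 * etil j i r - \<iota> (inverse vv) * etil j i r * etil i (i+1) 0
       = \<iota> (vv - inverse vv) * etil j (i+1) r"
  using j i
  by (intro e_exchange_bracket[OF cv rtt_model_D(6,7)[OF m] etil_e_exchange[OF cv m g j i]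
        tp_simple_root_0[OF m g]]) auto

lemma ftil_bracket:
  assumes cv: "cv_algebra \<iota>" and m: "rtt_model \<iota> n tp tm" and g: "gauss_decomp n tp tm etil ftil gp gm"
    and j: "1 \<le> j" "j < i" and i: "i < n"
  shows "ftil i j r * ftil (i+1) i 0 - \<iota> vv * ftil (i+1) i 0 * ftil i j r
       = \<iota> (inverse vv - vv) * ftil (i+1) j r"
  using j i
  by (intro f_exchange_bracket[OF cv rtt_model_D(7,6)[OF m] ftil_f_exchange[OF cv m g j i]
        tm_simple_root_0[OF m g]]) auto

lemma alg_iso_D:
  assumes "alg_iso \<iota>A \<iota>B \<Phi>"
  shows "bij \<Phi>" "\<Phi> (x * y) = \<Phi> x * \<Phi> y" "\<Phi> (\<iota>A c) = \<iota>B c" "\<Phi> (x - y) = \<Phi> x - \<Phi> y"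
proof -
  show "bij \<Phi>" "\<Phi> (x * y) = \<Phi> x * \<Phi> y" "\<Phi> (\<iota>A c) = \<iota>B c"
    using assms unfolding alg_iso_def by blast+
  have "\<Phi> (x - y) + \<Phi> y = \<Phi> x"
    using assms[unfolded alg_iso_def] by (metis diff_add_cancel)
  then show "\<Phi> (x - y) = \<Phi> x - \<Phi> y"
    by (simp add: eq_diff_eq)
qed

lemma alg_iso_qbr:
  assumes "alg_iso \<iota>A \<iota>B \<Phi>"
  shows "\<Phi> (qbr \<iota>A x a b) = \<Phi> a * \<Phi> b - \<iota>B x * \<Phi> b * \<Phi> a"
  unfolding qbr_def by (simp add: alg_iso_D[OF assms])

lemma qbr_scalars:
  assumes cv: "cv_algebra \<iota>"
  shows "(\<iota> d * Z) * (\<iota> c * e) - \<iota> w * (\<iota> c * e) * (\<iota> d * Z) = \<iota> (d * c) * (Z * e - \<iota> w * e * Z)"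
proof -
  note central = cv_algebra_central(1)[OF cv] and hom = cv_algebra_hom(4)[OF cv]
  have "(\<iota> d * Z) * (\<iota> c * e) = \<iota> d * ((Z * \<iota> c) * e)"
    by (simp only: mult.assoc)
  also have "\<dots> = \<iota> (d * c) * (Z * e)"
    by (simp only: central[of c Z, symmetric] hom mult.assoc)
  finally have 1: "(\<iota> d * Z) * (\<iota> c * e) = \<iota> (d * c) * (Z * e)" .
  have "\<iota> w * (\<iota> c * e) * (\<iota> d * Z) = \<iota> w * \<iota> c * ((e * \<iota> d) * Z)"
    by (simp only: mult.assoc)
  also have "\<dots> = \<iota> (w * c * d) * (e * Z)"
    by (simp only: central[of d e, symmetric] hom mult.assoc)
  also have "w * c * d = d * c * w"
    by (simp only: mult_ac)
  finally have 2: "\<iota> w * (\<iota> c * e) * (\<iota> d * Z) = \<iota> (d * c) * (\<iota> w * e * Z)"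
    by (simp only: hom mult.assoc)
  show ?thesis
    by (simp only: 1 2 right_diff_distrib)
qed

lemma upsilon_gens_D:
  assumes "upsilon_gens \<iota>B n \<Phi> e f php phm etil ftil gp gm" "k \<in> {1..<n}"
  shows "\<Phi> (e k r) = \<iota>B ((if r < 0 then -1 else 1) * vv powi (- (int k * r)) / (vv - inverse vv))
                        * etil k (k + 1) r"
    "\<Phi> (f k r) = \<iota>B ((if 0 < r then 1 else -1) * vv powi (- (int k * r)) / (vv - inverse vv))
                        * ftil (k + 1) k r"
  using assms unfolding upsilon_gens_def by blast+

lemma Phi_nestE:
  assumes cvB: "cv_algebra \<iota>B" and m: "rtt_model \<iota>B n tp tm" and g: "gauss_decomp n tp tm etil ftil gp gm"
    and iso: "alg_iso \<iota>A \<iota>B \<Phi>" and ups: "upsilon_gens \<iota>B n \<Phi> e f php phm etil ftil gp gm"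
    and j: "1 \<le> j"
  shows "j + k < n \<Longrightarrow> \<Phi> (nestE \<iota>A e j r k)
     = \<iota>B ((if r < 0 then -1 else 1) * vv powi (- (int j * r)) / (vv - inverse vv)) * etil j (j + k + 1) r"
proof (induction k)
  case 0
  then show ?case using upsilon_gens_D(1)[OF ups, of j r] j by simp
next
  case (Suc k)
  define c where "c = (if r < 0 then -1 else 1) * vv powi (- (int j * r)) / (vv - inverse vv)"
  define i where "i = j + Suc k"
  have i: "j < i" "i < n" using Suc.prems i_def by auto
  have IH: "\<Phi> (nestE \<iota>A e j r k) = \<iota>B c * etil j i r" using Suc i_def c_def by simp
  have e0: "\<Phi> (e i 0) = \<iota>B (1 / (vv - inverse vv)) * etil i (i + 1) 0"
    using upsilon_gens_D(1)[OF ups, of i 0] i j by simp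
  have scalar: "1 / (vv - inverse vv) * c * (vv - inverse vv) = c"
    using vv_minus_inverse_nonzero by simp
  have "\<Phi> (nestE \<iota>A e j r (Suc k))
      = \<iota>B (1 / (vv - inverse vv) * c) * (etil i (i+1) 0 * etil j i r - \<iota>B (inverse vv) * etil j i r * etil i (i+1) 0)"
    by (simp only: nestE.simps alg_iso_qbr[OF iso] i_def[symmetric] e0 IH qbr_scalars[OF cvB])
  also have "\<dots> = \<iota>B c * etil j (i+1) r"
    by (simp only: etil_bracket[OF cvB m g j i] mult.assoc[symmetric] cv_algebra_hom(4)[OF cvB, symmetric] scalar)
  finally show ?case by (simp add: c_def i_def)
qed

lemma Phi_nestF:
  assumes cvB: "cv_algebra \<iota>B" and m: "rtt_model \<iota>B n tp tm" and g: "gauss_decomp n tp tm etil ftil gp gm"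
    and iso: "alg_iso \<iota>A \<iota>B \<Phi>" and ups: "upsilon_gens \<iota>B n \<Phi> e f php phm etil ftil gp gm"
    and j: "1 \<le> j"
  shows "j + k < n \<Longrightarrow> \<Phi> (nestF \<iota>A f j r k)
     = \<iota>B ((if 0 < r then 1 else -1) * vv powi (- (int j * r)) / (vv - inverse vv)) * ftil (j + k + 1) j r"
proof (induction k)
  case 0
  then show ?case using upsilon_gens_D(2)[OF ups, of j r] j by simp
next
  case (Suc k)
  define c where "c = (if 0 < r then 1 else -1) * vv powi (- (int j * r)) / (vv - inverse vv)"
  define i where "i = j + Suc k"
  have i: "j < i" "i < n" using Suc.prems i_def by auto
  have IH: "\<Phi> (nestF \<iota>A f j r k) = \<iota>B c * ftil i j r" using Suc i_def c_def by simp
  have f0: "\<Phi> (f i 0) = \<iota>B (- 1 / (vv - inverse vv)) * ftil (i + 1) i 0"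
    using upsilon_gens_D(2)[OF ups, of i 0] i j by simp
  have scalar: "c * (- 1 / (vv - inverse vv)) * (inverse vv - vv) = c"
    using vv_minus_inverse_nonzero by (simp add: field_simps)
  have "\<Phi> (nestF \<iota>A f j r (Suc k))
      = \<iota>B (c * (- 1 / (vv - inverse vv))) * (ftil i j r * ftil (i+1) i 0 - \<iota>B vv * ftil (i+1) i 0 * ftil i j r)"
    by (simp only: nestF.simps alg_iso_qbr[OF iso] i_def[symmetric] f0 IH qbr_scalars[OF cvB])
  also have "\<dots> = \<iota>B c * ftil (i+1) j r"
    by (simp only: ftil_bracket[OF cvB m g j i] mult.assoc[symmetric] cv_algebra_hom(4)[OF cvB, symmetric] scalar)
  finally show ?case by (simp add: c_def i_def)
qed

theorem corollary3p23:
  fixes n i j :: nat and r :: int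
    and \<iota>A :: "cv \<Rightarrow> 'a::ring_1" and \<iota>B :: "cv \<Rightarrow> 'b::ring_1" and \<Phi> :: "'a \<Rightarrow> 'b"
    and e f :: "nat \<Rightarrow> int \<Rightarrow> 'a" and php phm :: "nat \<Rightarrow> nat \<Rightarrow> 'a"
    and tp tm :: "nat \<Rightarrow> nat \<Rightarrow> nat \<Rightarrow> 'b"
    and etil ftil :: "nat \<Rightarrow> nat \<Rightarrow> int \<Rightarrow> 'b" and gp gm :: "nat \<Rightarrow> nat \<Rightarrow> 'b"
  assumes "cv_algebra \<iota>A" and "cv_algebra \<iota>B"
    and "rtt_model \<iota>B n tp tm"
    and "gauss_decomp n tp tm etil ftil gp gm"
    and "alg_iso \<iota>A \<iota>B \<Phi>"
    and "upsilon_gens \<iota>B n \<Phi> e f php phm etil ftil gp gm"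
    and "1 \<le> j" and "j \<le> i" and "i < n"
  shows "Eroot \<iota>A e r j i
           = \<iota>A ((if r < 0 then -1 else 1) * vv powi (- (int j * r))) * inv \<Phi> (etil j (i + 1) r)
         \<and> Froot \<iota>A f r j i
           = \<iota>A ((if 0 < r then -1 else 1) * vv powi (- (int j * r))) * inv \<Phi> (ftil (i + 1) j r)"
proof -
  note cvB = assms(2) and iso = assms(5)
  note nest = Phi_nestE[OF cvB assms(3,4) iso assms(6,7), of "i - j" r]
    Phi_nestF[OF cvB assms(3,4) iso assms(6,7), of "i - j" r]
  have inj: "inj \<Phi>" and surj: "\<And>y. \<Phi> (inv \<Phi> y) = y"
    using alg_iso_D(1)[OF iso] by (simp_all add: bij_is_inj bij_is_surj surj_f_inv_f)
  have sign_flip: "(inverse vv - vv) * x / (vv - inverse vv) = - x" for x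
    using vv_minus_inverse_nonzero by (simp add: field_simps)
  have "\<Phi> (Eroot \<iota>A e r j i) = \<Phi> (\<iota>A ((if r < 0 then -1 else 1) * vv powi (- (int j * r))) * inv \<Phi> (etil j (i + 1) r))"
    using nest(1) assms(8,9) vv_minus_inverse_nonzero
    by (simp add: Eroot_def alg_iso_D[OF iso] surj mult.assoc[symmetric] cv_algebra_hom(4)[OF cvB, symmetric])
  moreover have "\<Phi> (Froot \<iota>A f r j i) = \<Phi> (\<iota>A ((if 0 < r then -1 else 1) * vv powi (- (int j * r))) * inv \<Phi> (ftil (i + 1) j r))"
    using nest(2) assms(8,9) vv_minus_inverse_nonzero
    by (simp add: sign_flip Froot_def alg_iso_D[OF iso] surj mult.assoc[symmetric] cv_algebra_hom(4)[OF cvB, symmetric])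
  ultimately show ?thesis
    using inj by (simp add: inj_eq)
qed

end
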